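(* For a composition $I$, let $\mathcal C_I=\sum_{\sigma:\ \mathrm{SC}(\sigma)=I}\mathbf G_\sigma\in\mathbf{FQSym}$ (with $\mathcal C_{\emptyset}=\mathbf G_{\emptyset}=1$). Then the elements $\mathcal C_I$ span a sub-coalgebra of $\mathbf{FQSym}$; more precisely, for every composition $I$ there are nonnegative integers $a_I^{JK}$ such that $$\Delta\,\mathcal C_I=\sum_{J,K}a_I^{JK}\,\mathcal C_J\otimes\mathcal C_K,$$ the sum running over pairs of (possibly empty) compositions $J,K$.
   Context: Permutations are viewed as words. A word $a_1\cdots a_m$ is initially dominated if $a_1>a_j$ for all $j\ge2$; every permutation $\sigma$ factors uniquely as $\sigma=u_1\cdots u_r$ into initially dominated words with increasing first letters, and its saillance composition is $\mathrm{SC}(\sigma)=(|u_1|,\ldots,|u_r|)$. $\mathbf{FQSym}$ is the Hopf algebra of free quasi-symmetric functions (over $\mathbb Q$), with basis $\mathbf G_\sigma$, $\sigma$ ranging over all permutations of all sizes $n\ge0$, and coproduct $\Delta\mathbf G_\sigma=\sum_{k=0}^{n}\mathbf G_{\sigma|_{[1,k]}}\otimes\mathbf G_{\mathrm{std}(\sigma|_{[k+1,n]})}$ for $\sigma\in\mathfrak S_n$, where $\sigma|_{[a,b]}$ is the subword of $\sigma$ formed by the letters in $[a,b]$ and $\mathrm{std}$ denotes standardization. *)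

theory Defs
  imports Complex_Main
begin

definition is_perm :: "nat list \<Rightarrow> bool" where
  "is_perm \<sigma> \<longleftrightarrow> distinct \<sigma> \<and> set \<sigma> = {1..length \<sigma>}"

definition is_composition :: "nat list \<Rightarrow> bool" where
  "is_composition I \<longleftrightarrow> (\<forall>i\<in>set I. 0 < i)"

definition init_dominated :: "nat list \<Rightarrow> bool" where
  "init_dominated u \<longleftrightarrow> u \<noteq> [] \<and> (\<forall>j. 1 \<le> j \<and> j < length u \<longrightarrow> u ! j < u ! 0)"

definition sal_factorization :: "nat list \<Rightarrow> nat list list \<Rightarrow> bool" where
  "sal_factorization \<sigma> us \<longleftrightarrow> concat us = \<sigma> \<and> (\<forall>u\<in>set us. init_dominated u)
      \<and> sorted_wrt (<) (map hd us)"

definition SC :: "nat list \<Rightarrow> nat list" where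
  "SC \<sigma> = map length (THE us. sal_factorization \<sigma> us)"

definition std :: "nat list \<Rightarrow> nat list" where
  "std w = map (\<lambda>x. card {y \<in> set w. y \<le> x}) w"

(* Elements of FQSym: rational coefficient functions on permutations (finite support,
   coefficient of G_sigma at sigma); elements of FQSym \<otimes> FQSym: coefficient functions
   on pairs of permutations (coefficient of G_alpha \<otimes> G_beta at (alpha,beta)). *)
type_synonym fqsym = "nat list \<Rightarrow> rat"
type_synonym fqsym2 = "nat list \<times> nat list \<Rightarrow> rat"

definition G :: "nat list \<Rightarrow> fqsym" where
  "G \<sigma> = (\<lambda>\<tau>. if \<tau> = \<sigma> then 1 else 0)"

definition tensor :: "fqsym \<Rightarrow> fqsym \<Rightarrow> fqsym2" where
  "tensor x y = (\<lambda>(\<alpha>, \<beta>). x \<alpha> * y \<beta>)"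

definition DeltaG :: "nat list \<Rightarrow> fqsym2" where
  "DeltaG \<sigma> = (\<lambda>p. \<Sum>k\<in>{0..length \<sigma>}.
      tensor (G (filter (\<lambda>x. x \<le> k) \<sigma>)) (G (std (filter (\<lambda>x. k < x) \<sigma>))) p)"

(* linear extension of the coproduct (for finitely supported x) *)
definition Delta :: "fqsym \<Rightarrow> fqsym2" where
  "Delta x = (\<lambda>p. \<Sum>\<sigma>\<in>{\<sigma>. x \<sigma> \<noteq> 0}. x \<sigma> * DeltaG \<sigma> p)"

definition C :: "nat list \<Rightarrow> fqsym" where
  "C I = (\<lambda>\<sigma>. if is_perm \<sigma> \<and> SC \<sigma> = I then 1 else 0)"

end

theory Submission imports Defs begin

text \<open>
  For a word with distinct letters, the saillance factorization cuts exactly before the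
  left-to-right maxima (records), so \<open>SC \<sigma>\<close> is encoded by the Boolean word marking the
  records of \<open>\<sigma>\<close>. The term \<open>G\<^sub>\<alpha> \<otimes> G\<^sub>\<beta>\<close> occurs in \<open>\<Delta> G\<^sub>\<sigma>\<close> iff \<open>\<sigma>\<close> is a shuffle of \<open>\<alpha>\<close> with
  \<open>\<beta>\<close> shifted above all letters of \<open>\<alpha>\<close>, and such shuffles are indexed by the Boolean words
  \<open>w\<close> telling which positions come from \<open>\<alpha>\<close>. In the shuffle, a letter of \<open>\<beta>\<close> is a record iff
  it is one in \<open>\<beta>\<close>, and a letter of \<open>\<alpha>\<close> is a record iff it is one in \<open>\<alpha>\<close> and no letter
  of \<open>\<beta>\<close> precedes it. So the records of the shuffle, hence its saillance composition, depend
  only on \<open>w\<close>, \<open>SC \<alpha>\<close> and \<open>SC \<beta>\<close>, and the coefficient of \<open>G\<^sub>\<alpha> \<otimes> G\<^sub>\<beta>\<close> in \<open>\<Delta> C\<^sub>I\<close> is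
  a number \<open>a\<^sub>I\<^sup>J\<^sup>K\<close> of words \<open>w\<close> depending only on \<open>J = SC \<alpha>\<close> and \<open>K = SC \<beta>\<close>.
\<close>

section \<open>Saillance factorization\<close>

function sal_factors :: "nat list \<Rightarrow> nat list list" where
  "sal_factors [] = []"
| "sal_factors (x # xs) =
     (x # takeWhile (\<lambda>y. y < x) xs) # sal_factors (dropWhile (\<lambda>y. y < x) xs)"
  by pat_completeness auto
termination by (relation "measure length") (auto simp: le_imp_less_Suc length_dropWhile_le)

lemma hd_hd_sal_factors: "xs \<noteq> [] \<Longrightarrow> hd (hd (sal_factors xs)) = hd xs"
  by (cases xs) auto

lemma sal_factorization_sal_factors: "distinct \<sigma> \<Longrightarrow> sal_factorization \<sigma> (sal_factors \<sigma>)"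
proof (induction \<sigma> rule: sal_factors.induct)
  case 1
  then show ?case by (simp add: sal_factorization_def)
next
  case (2 x xs)
  define r where "r = dropWhile (\<lambda>y. y < x) xs"
  have IH: "sal_factorization r (sal_factors r)"
    using 2 by (simp add: r_def distinct_dropWhile)
  have "init_dominated (x # takeWhile (\<lambda>y. y < x) xs)"
  proof -
    have "takeWhile (\<lambda>y. y < x) xs ! i < x" if "i < length (takeWhile (\<lambda>y. y < x) xs)" for i
      using nth_mem[OF that] by (blast dest: set_takeWhileD)
    then show ?thesis unfolding init_dominated_def by (auto simp: nth_Cons')
  qed
  moreover have "x < hd (hd (sal_factors r))" if "r \<noteq> []"
  proof -
    have "\<not> hd r < x"
      using that hd_dropWhile[of "\<lambda>y. y < x" xs] by (simp add: r_def)
    moreover have "hd r \<in> set xs"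
      using hd_in_set[OF that] by (auto simp: r_def dest: set_dropWhileD)
    ultimately have "x < hd r" by (cases "hd r = x") (use "2.prems" in auto)
    then show ?thesis using hd_hd_sal_factors[OF that] by simp
  qed
  moreover have "hd (hd (sal_factors r)) \<le> hd u" if "u \<in> set (sal_factors r)" for u
    using IH that unfolding sal_factorization_def
    by (cases "sal_factors r") (auto simp: less_imp_le)
  ultimately have "\<forall>u\<in>set (sal_factors r). x < hd u"
    by (cases "r = []") (auto intro: less_le_trans)
  with IH \<open>init_dominated _\<close> show ?case
    by (simp add: sal_factorization_def r_def)
qed

lemma sal_factorization_unique: "sal_factorization \<sigma> us \<Longrightarrow> us = sal_factors \<sigma>"
proof (induction us arbitrary: \<sigma>)
  case Nil
  then show ?case by (simp add: sal_factorization_def)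
next
  case (Cons u us)
  have idom: "init_dominated u"
    using Cons.prems by (simp add: sal_factorization_def)
  then obtain x r where u: "u = x # r"
    unfolding init_dominated_def by (cases u) auto
  have r: "\<forall>y\<in>set r. y < x"
  proof
    fix y assume "y \<in> set r"
    then obtain j where "j < length r" "y = r ! j" by (auto simp: in_set_conv_nth)
    moreover have "1 \<le> Suc j \<and> Suc j < length u" using \<open>j < length r\<close> u by simp
    with idom have "u ! Suc j < u ! 0" unfolding init_dominated_def by blast
    ultimately show "y < x" using u by simp
  qed
  have rest: "sal_factorization (concat us) us"
    using Cons.prems by (simp add: sal_factorization_def)
  have "concat us = [] \<or> x < hd (concat us)"
  proof (cases us)
    case (Cons v vs)
    moreover have "v \<noteq> []" "x < hd v"
      using \<open>sal_factorization \<sigma> (u # us)\<close> u Cons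
      unfolding sal_factorization_def init_dominated_def by simp_all
    ultimately show ?thesis by simp
  qed simp
  then have "takeWhile (\<lambda>y. y < x) (concat us) = []" "dropWhile (\<lambda>y. y < x) (concat us) = concat us"
    by (auto simp: takeWhile_eq_Nil_iff dropWhile_eq_self_iff)
  moreover have "\<sigma> = x # r @ concat us"
    using Cons.prems u by (simp add: sal_factorization_def)
  ultimately show ?case
    using Cons.IH[OF rest] u r by (simp add: takeWhile_append2 dropWhile_append2)
qed

lemma SC_eq_map_length_sal_factors: "distinct \<sigma> \<Longrightarrow> SC \<sigma> = map length (sal_factors \<sigma>)"
  unfolding SC_def
  using sal_factorization_sal_factors sal_factorization_unique by (metis the_equality)

lemma is_composition_SC:
  assumes "distinct \<sigma>"
  shows "is_composition (SC \<sigma>)"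
proof -
  have "u \<noteq> []" if "u \<in> set (sal_factors \<sigma>)" for u
    using that sal_factorization_sal_factors[OF assms]
    unfolding sal_factorization_def init_dominated_def by blast
  then show ?thesis
    using assms by (auto simp: SC_eq_map_length_sal_factors is_composition_def)
qed

lemma sum_list_SC: "distinct \<sigma> \<Longrightarrow> sum_list (SC \<sigma>) = length \<sigma>"
  using sal_factorization_sal_factors[of \<sigma>] length_concat[of "sal_factors \<sigma>"]
  by (simp add: SC_eq_map_length_sal_factors sal_factorization_def)

section \<open>Records\<close>

fun record_marks :: "nat set \<Rightarrow> nat list \<Rightarrow> bool list" where
  "record_marks A [] = []"
| "record_marks A (x # xs) = (\<forall>a\<in>A. a < x) # record_marks (insert x A) xs"

lemma record_marks_cong:
  "(\<And>z. (\<forall>a\<in>A. a < z) \<longleftrightarrow> (\<forall>b\<in>B. b < z)) \<Longrightarrow> record_marks A xs = record_marks B xs"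
proof (induction xs arbitrary: A B)
  case (Cons x xs)
  have "record_marks (insert x A) xs = record_marks (insert x B) xs"
    by (rule Cons.IH) (use Cons.prems in auto)
  with Cons.prems show ?case by simp
qed simp

lemma record_marks_singleton:
  "x \<notin> set xs \<Longrightarrow> record_marks {x} xs =
     replicate (length (takeWhile (\<lambda>y. y < x) xs)) False @ record_marks {} (dropWhile (\<lambda>y. y < x) xs)"
proof (induction xs)
  case (Cons y ys)
  show ?case
  proof (cases "y < x")
    case True
    then have "record_marks {y, x} ys = record_marks {x} ys"
      by (intro record_marks_cong) auto
    with True Cons show ?thesis by simp
  next
    case False
    with Cons.prems have "x < y" by simp
    then have "record_marks {y, x} ys = record_marks {y} ys"
      by (intro record_marks_cong) auto
    with \<open>x < y\<close> show ?thesis by simp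
  qed
qed simp

definition comp_marks :: "nat list \<Rightarrow> bool list" where
  "comp_marks I = concat (map (\<lambda>i. True # replicate (i - 1) False) I)"

lemma comp_marks_Cons: "comp_marks (i # I) = True # replicate (i - 1) False @ comp_marks I"
  by (simp add: comp_marks_def)

lemma record_marks_eq_comp_marks_SC: "distinct \<sigma> \<Longrightarrow> record_marks {} \<sigma> = comp_marks (SC \<sigma>)"
proof -
  have "distinct \<sigma> \<Longrightarrow> record_marks {} \<sigma> = comp_marks (map length (sal_factors \<sigma>))"
    by (induction \<sigma> rule: sal_factors.induct)
      (simp_all add: comp_marks_def record_marks_singleton distinct_dropWhile)
  then show "distinct \<sigma> \<Longrightarrow> ?thesis" by (simp add: SC_eq_map_length_sal_factors)
qed

function marks_comp :: "bool list \<Rightarrow> nat list" where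
  "marks_comp [] = []"
| "marks_comp (b # bs) = Suc (length (takeWhile Not bs)) # marks_comp (dropWhile Not bs)"
  by pat_completeness auto
termination by (relation "measure length") (auto simp: le_imp_less_Suc length_dropWhile_le)

lemma marks_comp_comp_marks: "is_composition I \<Longrightarrow> marks_comp (comp_marks I) = I"
proof (induction I)
  case (Cons i I)
  then have "0 < i" "is_composition I" by (auto simp: is_composition_def)
  moreover have "comp_marks I = [] \<or> hd (comp_marks I)"
    by (cases I) (simp_all add: comp_marks_def)
  then have "takeWhile Not (comp_marks I) = []" "dropWhile Not (comp_marks I) = comp_marks I"
    by (auto simp: takeWhile_eq_Nil_iff dropWhile_eq_self_iff)
  moreover have "takeWhile Not (replicate m False @ bs) = replicate m False @ takeWhile Not bs"
    "dropWhile Not (replicate m False @ bs) = dropWhile Not bs" for m bs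
    by (induction m) auto
  ultimately show ?case
    using Cons.IH by (simp add: comp_marks_Cons)
qed (simp add: comp_marks_def)

lemma SC_eq_iff_record_marks:
  assumes "distinct \<sigma>" and "is_composition I"
  shows "SC \<sigma> = I \<longleftrightarrow> record_marks {} \<sigma> = comp_marks I"
  using assms record_marks_eq_comp_marks_SC is_composition_SC marks_comp_comp_marks by metis

section \<open>Shuffles\<close>

fun merge :: "bool list \<Rightarrow> 'a list \<Rightarrow> 'a list \<Rightarrow> 'a list" where
  "merge (True # w) (x # xs) ys = x # merge w xs ys"
| "merge (False # w) xs (y # ys) = y # merge w xs ys"
| "merge _ _ _ = []"

lemma merge_map_filter: "merge (map P xs) (filter P xs) (filter (\<lambda>x. \<not> P x) xs) = xs"
  by (induction xs) auto

definition shuffle_words :: "nat \<Rightarrow> nat \<Rightarrow> bool list set" where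
  "shuffle_words k l = {w. count_list w True = k \<and> count_list w False = l}"

lemma length_merge:
  "w \<in> shuffle_words (length xs) (length ys) \<Longrightarrow> length (merge w xs ys) = length xs + length ys"
proof (induction w arbitrary: xs ys)
  case (Cons b w)
  then show ?case by (cases b; cases xs; cases ys) (auto simp: shuffle_words_def)
qed (simp add: shuffle_words_def)

lemma set_merge:
  "w \<in> shuffle_words (length xs) (length ys) \<Longrightarrow> set (merge w xs ys) = set xs \<union> set ys"
proof (induction w arbitrary: xs ys)
  case (Cons b w)
  then show ?case by (cases b; cases xs; cases ys) (auto simp: shuffle_words_def)
qed (simp add: shuffle_words_def)

lemma merge_separated:
  assumes "w \<in> shuffle_words (length xs) (length ys)"
    and "\<forall>x\<in>set xs. P x" "\<forall>y\<in>set ys. \<not> P y"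
  shows "filter P (merge w xs ys) = xs \<and> filter (\<lambda>x. \<not> P x) (merge w xs ys) = ys
    \<and> map P (merge w xs ys) = w"
  using assms
proof (induction w arbitrary: xs ys)
  case (Cons b w)
  then show ?case by (cases b; cases xs; cases ys) (auto simp: shuffle_words_def)
qed (simp add: shuffle_words_def)

lemma inj_on_merge:
  assumes "set xs \<inter> set ys = {}"
  shows "inj_on (\<lambda>w. merge w xs ys) (shuffle_words (length xs) (length ys))"
proof (rule inj_on_inverseI)
  fix w assume "w \<in> shuffle_words (length xs) (length ys)"
  then show "map (\<lambda>x. x \<in> set xs) (merge w xs ys) = w"
    using merge_separated[of w xs ys "\<lambda>x. x \<in> set xs"] assms by auto
qed

lemma map_in_shuffle_words:
  "map P xs \<in> shuffle_words (length (filter P xs)) (length (filter (\<lambda>x. \<not> P x) xs))"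
  by (induction xs) (auto simp: shuffle_words_def)

text \<open>The flag \<open>s\<close> tells whether a letter of the upper word has already been placed;
  from then on no letter of the lower word is a record.\<close>

fun merge_records :: "bool \<Rightarrow> bool list \<Rightarrow> bool list \<Rightarrow> bool list \<Rightarrow> bool list" where
  "merge_records s (True # w) (r # p) q = (r \<and> \<not> s) # merge_records s w p q"
| "merge_records s (False # w) p (r # q) = r # merge_records True w p q"
| "merge_records _ _ _ _ = []"

lemma record_marks_merge:
  assumes "\<forall>x\<in>set xs \<union> A. \<forall>y\<in>set ys. x < y" and "\<forall>x\<in>set xs. \<forall>b\<in>B. x < b"
  shows "record_marks (A \<union> B) (merge w xs ys)
       = merge_records (B \<noteq> {}) w (record_marks A xs) (record_marks B ys)"
  using assms
proof (induction w arbitrary: xs ys A B)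
  case (Cons b w)
  show ?case
  proof (cases b)
    case True
    show ?thesis
    proof (cases xs)
      case (Cons x xs')
      have "record_marks (insert x A \<union> B) (merge w xs' ys)
          = merge_records (B \<noteq> {}) w (record_marks (insert x A) xs') (record_marks B ys)"
        using Cons.IH[of xs' "insert x A" ys B] Cons.prems \<open>xs = x # xs'\<close> by simp
      moreover have "\<forall>b\<in>B. x < b"
        using Cons.prems \<open>xs = x # xs'\<close> by simp
      then have "(\<forall>a\<in>A \<union> B. a < x) \<longleftrightarrow> (\<forall>a\<in>A. a < x) \<and> B = {}"
        by (metis Un_iff ex_in_conv less_asym)
      ultimately show ?thesis using \<open>b\<close> \<open>xs = x # xs'\<close> by simp
    qed (simp add: \<open>b\<close>)
  next
    case False
    show ?thesis
    proof (cases ys)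
      case (Cons y ys')
      have "record_marks (A \<union> insert y B) (merge w xs ys')
          = merge_records True w (record_marks A xs) (record_marks (insert y B) ys')"
        using Cons.IH[of xs A ys' "insert y B"] Cons.prems \<open>ys = y # ys'\<close> by simp
      moreover have "(\<forall>a\<in>A \<union> B. a < y) \<longleftrightarrow> (\<forall>a\<in>B. a < y)"
        using Cons.prems \<open>ys = y # ys'\<close> by auto
      ultimately show ?thesis using \<open>\<not> b\<close> \<open>ys = y # ys'\<close> by simp
    qed (simp add: \<open>\<not> b\<close>)
  qed
qed simp

lemma record_marks_shift:
  "record_marks ((\<lambda>x. x + k) ` A) (map (\<lambda>x. x + k) xs) = record_marks A xs"
proof (induction xs arbitrary: A)
  case (Cons x xs)
  have "record_marks (insert (x + k) ((\<lambda>x. x + k) ` A)) (map (\<lambda>x. x + k) xs)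
      = record_marks (insert x A) xs"
    using Cons.IH[of "insert x A"] by simp
  then show ?case by simp
qed simp

section \<open>Deconcatenation of permutations\<close>

lemma std_shift: "set xs = {Suc k..m} \<Longrightarrow> std xs = map (\<lambda>x. x - k) xs"
  unfolding std_def
proof (rule map_cong[OF refl])
  fix x assume "set xs = {Suc k..m}" "x \<in> set xs"
  then have "{y \<in> set xs. y \<le> x} = {Suc k..x}" by auto
  then show "card {y \<in> set xs. y \<le> x} = x - k" by simp
qed

lemma set_filter_le_perm: "is_perm \<sigma> \<Longrightarrow> k \<le> length \<sigma> \<Longrightarrow> set (filter (\<lambda>x. x \<le> k) \<sigma>) = {1..k}"
  by (auto simp: is_perm_def)

lemma length_filter_le_perm: "is_perm \<sigma> \<Longrightarrow> k \<le> length \<sigma> \<Longrightarrow> length (filter (\<lambda>x. x \<le> k) \<sigma>) = k"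
  using set_filter_le_perm[of \<sigma> k] distinct_card[of "filter (\<lambda>x. x \<le> k) \<sigma>"]
  by (simp add: is_perm_def)

lemma set_filter_greater_perm: "is_perm \<sigma> \<Longrightarrow> set (filter (\<lambda>x. k < x) \<sigma>) = {Suc k..length \<sigma>}"
  by (auto simp: is_perm_def)

lemma filter_greater_perm_eq_shift_std:
  assumes "is_perm \<sigma>"
  shows "filter (\<lambda>x. k < x) \<sigma> = map (\<lambda>x. x + k) (std (filter (\<lambda>x. k < x) \<sigma>))"
proof -
  have "std (filter (\<lambda>x. k < x) \<sigma>) = map (\<lambda>x. x - k) (filter (\<lambda>x. k < x) \<sigma>)"
    using std_shift set_filter_greater_perm[OF assms] by blast
  moreover have "map (\<lambda>x. x - k + k) (filter (\<lambda>x. k < x) \<sigma>) = filter (\<lambda>x. k < x) \<sigma>"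
    by (rule map_idI) simp
  ultimately show ?thesis by (simp add: comp_def)
qed

definition splits_into :: "nat list \<Rightarrow> nat list \<Rightarrow> nat list \<Rightarrow> bool" where
  "splits_into \<sigma> \<alpha> \<beta> \<longleftrightarrow>
     filter (\<lambda>x. x \<le> length \<alpha>) \<sigma> = \<alpha> \<and> std (filter (\<lambda>x. length \<alpha> < x) \<sigma>) = \<beta>"

lemma splits_into_perm:
  assumes "is_perm \<sigma>" and "splits_into \<sigma> \<alpha> \<beta>"
  shows "is_perm \<alpha>" "is_perm \<beta>" "length \<alpha> + length \<beta> = length \<sigma>"
proof -
  define k where "k = length \<alpha>"
  have lower: "filter (\<lambda>x. x \<le> k) \<sigma> = \<alpha>" and upper: "filter (\<lambda>x. k < x) \<sigma> = map (\<lambda>x. x + k) \<beta>"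
    using assms filter_greater_perm_eq_shift_std[OF assms(1), of k]
    by (simp_all add: splits_into_def k_def)
  have "k \<le> length \<sigma>"
    unfolding k_def by (subst lower[symmetric]) (rule length_filter_le)
  have "distinct \<sigma>" using assms(1) by (simp add: is_perm_def)
  have "length \<sigma> = k + length \<beta>"
    using sum_length_filter_compl[of "\<lambda>x. x \<le> k" \<sigma>] lower upper by (simp add: not_le k_def)
  have "(\<lambda>x. x + k) ` set \<beta> = (\<lambda>x. x + k) ` {1..length \<beta>}"
    using set_filter_greater_perm[OF assms(1), of k] upper \<open>length \<sigma> = k + length \<beta>\<close>
    by (simp add: add.commute)
  moreover have "inj (\<lambda>x::nat. x + k)" by (simp add: inj_def)
  ultimately have "set \<beta> = {1..length \<beta>}" by (simp only: inj_image_eq_iff)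
  moreover have "distinct \<alpha>" "distinct (map (\<lambda>x. x + k) \<beta>)"
    using distinct_filter[OF \<open>distinct \<sigma>\<close>] lower upper by metis+
  moreover have "set \<alpha> = {1..k}"
    using set_filter_le_perm[OF assms(1) \<open>k \<le> length \<sigma>\<close>] lower by simp
  ultimately show "is_perm \<alpha>" "is_perm \<beta>" "length \<alpha> + length \<beta> = length \<sigma>"
    using \<open>length \<sigma> = k + length \<beta>\<close> by (simp_all add: is_perm_def distinct_map k_def)
qed

lemma perms_splitting_into_eq_merge:
  assumes "is_perm \<alpha>" and "is_perm \<beta>"
  shows "{\<sigma>. is_perm \<sigma> \<and> splits_into \<sigma> \<alpha> \<beta>}
       = (\<lambda>w. merge w \<alpha> (map (\<lambda>x. x + length \<alpha>) \<beta>)) ` shuffle_words (length \<alpha>) (length \<beta>)"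
    (is "?S = ?f ` ?W")
proof
  define k where "k = length \<alpha>"
  define \<gamma> where "\<gamma> = map (\<lambda>x. x + k) \<beta>"
  have set_\<alpha>: "set \<alpha> = {1..k}" and set_\<gamma>: "set \<gamma> = {Suc k..k + length \<beta>}"
    using assms by (auto simp: is_perm_def k_def \<gamma>_def)
  show "?f ` ?W \<subseteq> ?S"
  proof
    fix \<sigma> assume "\<sigma> \<in> ?f ` ?W"
    then obtain w where w: "w \<in> ?W" and \<sigma>: "\<sigma> = merge w \<alpha> \<gamma>"
      by (auto simp: k_def \<gamma>_def)
    have counts: "w \<in> shuffle_words (length \<alpha>) (length \<gamma>)"
      using w by (simp add: \<gamma>_def)
    have parts: "filter (\<lambda>x. x \<le> k) \<sigma> = \<alpha>" "filter (\<lambda>x. k < x) \<sigma> = \<gamma>"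
      using merge_separated[OF counts, of "\<lambda>x. x \<le> k"] set_\<alpha> set_\<gamma>
      by (auto simp: \<sigma> not_le)
    have "length \<sigma> = k + length \<beta>"
      using length_merge[OF counts] by (simp add: \<sigma> k_def \<gamma>_def)
    moreover have "set \<sigma> = {1..k + length \<beta>}"
      using set_merge[OF counts] set_\<alpha> set_\<gamma> by (auto simp: \<sigma>)
    ultimately have "is_perm \<sigma>"
      by (simp add: is_perm_def card_distinct)
    moreover have "std \<gamma> = \<beta>"
      using std_shift[OF set_\<gamma>] by (simp add: \<gamma>_def comp_def)
    ultimately show "\<sigma> \<in> ?S"
      using parts by (simp add: splits_into_def k_def)
  qed
  show "?S \<subseteq> ?f ` ?W"
  proof
    fix \<sigma> assume "\<sigma> \<in> ?S"
    then have "is_perm \<sigma>" and lower: "filter (\<lambda>x. x \<le> k) \<sigma> = \<alpha>"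
      and upper: "filter (\<lambda>x. k < x) \<sigma> = \<gamma>"
      using filter_greater_perm_eq_shift_std[of \<sigma> k]
      by (auto simp: splits_into_def k_def \<gamma>_def)
    define w where "w = map (\<lambda>x. x \<le> k) \<sigma>"
    have "\<sigma> = merge w \<alpha> \<gamma>"
      using merge_map_filter[of "\<lambda>x. x \<le> k" \<sigma>] lower upper by (simp add: w_def not_le)
    moreover have "w \<in> ?W"
      using map_in_shuffle_words[of "\<lambda>x. x \<le> k" \<sigma>] lower upper
      by (simp add: w_def k_def \<gamma>_def not_le)
    ultimately show "\<sigma> \<in> ?f ` ?W"
      by (auto simp: k_def \<gamma>_def)
  qed
qed

lemma record_marks_merge_perms:
  assumes "is_perm \<alpha>" and "is_perm \<beta>"
  shows "record_marks {} (merge w \<alpha> (map (\<lambda>x. x + length \<alpha>) \<beta>))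
       = merge_records False w (comp_marks (SC \<alpha>)) (comp_marks (SC \<beta>))"
proof -
  have "\<forall>x\<in>set \<alpha>. \<forall>y\<in>set (map (\<lambda>x. x + length \<alpha>) \<beta>). x < y"
    using assms by (auto simp: is_perm_def)
  then have "record_marks {} (merge w \<alpha> (map (\<lambda>x. x + length \<alpha>) \<beta>))
      = merge_records False w (record_marks {} \<alpha>) (record_marks {} (map (\<lambda>x. x + length \<alpha>) \<beta>))"
    using record_marks_merge[of \<alpha> "{}" _ "{}" w] by simp
  also have "record_marks {} (map (\<lambda>x. x + length \<alpha>) \<beta>) = record_marks {} \<beta>"
    using record_marks_shift[of "length \<alpha>" "{}" \<beta>] by simp
  finally show ?thesis
    using assms by (simp add: record_marks_eq_comp_marks_SC is_perm_def)
qed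

lemma card_perms_SC_splitting_into:
  assumes "is_composition I" and "is_perm \<alpha>" and "is_perm \<beta>"
  shows "card {\<sigma>. is_perm \<sigma> \<and> SC \<sigma> = I \<and> splits_into \<sigma> \<alpha> \<beta>}
       = card {w \<in> shuffle_words (length \<alpha>) (length \<beta>).
           merge_records False w (comp_marks (SC \<alpha>)) (comp_marks (SC \<beta>)) = comp_marks I}"
proof -
  define f where "f = (\<lambda>w. merge w \<alpha> (map (\<lambda>x. x + length \<alpha>) \<beta>))"
  define W where "W = shuffle_words (length \<alpha>) (length \<beta>)"
  have perm: "is_perm (f w)" if "w \<in> W" for w
    using that perms_splitting_into_eq_merge[OF assms(2,3)] by (auto simp: f_def W_def)
  have "inj_on f W"
    using inj_on_merge[of \<alpha> "map (\<lambda>x. x + length \<alpha>) \<beta>"] assms(2,3)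
    by (auto simp: f_def W_def is_perm_def)
  have "{\<sigma>. is_perm \<sigma> \<and> SC \<sigma> = I \<and> splits_into \<sigma> \<alpha> \<beta>}
      = {\<sigma> \<in> {\<sigma>. is_perm \<sigma> \<and> splits_into \<sigma> \<alpha> \<beta>}. SC \<sigma> = I}"
    by auto
  also have "\<dots> = f ` {w \<in> W. SC (f w) = I}"
    unfolding perms_splitting_into_eq_merge[OF assms(2,3)] by (auto simp: f_def W_def)
  also have "{w \<in> W. SC (f w) = I}
      = {w \<in> W. merge_records False w (comp_marks (SC \<alpha>)) (comp_marks (SC \<beta>)) = comp_marks I}"
  proof -
    have "SC (f w) = I \<longleftrightarrow>
        merge_records False w (comp_marks (SC \<alpha>)) (comp_marks (SC \<beta>)) = comp_marks I"
      if "w \<in> W" for w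
      using SC_eq_iff_record_marks[of "f w" I] perm[OF that] assms(1)
        record_marks_merge_perms[OF assms(2,3), of w]
      by (simp add: f_def is_perm_def)
    then show ?thesis by blast
  qed
  finally show ?thesis
    using card_image[OF inj_on_subset[OF \<open>inj_on f W\<close>]] by (simp add: W_def)
qed

section \<open>The coproduct of C\<close>

lemma DeltaG_perm_apply:
  assumes "is_perm \<sigma>"
  shows "DeltaG \<sigma> (\<alpha>, \<beta>) = of_bool (splits_into \<sigma> \<alpha> \<beta>)"
proof -
  have "tensor (G (filter (\<lambda>x. x \<le> k) \<sigma>)) (G (std (filter (\<lambda>x. k < x) \<sigma>))) (\<alpha>, \<beta>)
      = (if k = length \<alpha> then of_bool (splits_into \<sigma> \<alpha> \<beta>) else 0)"
    if "k \<in> {0..length \<sigma>}" for k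
    using that length_filter_le_perm[OF assms, of k]
    by (auto simp: tensor_def G_def splits_into_def)
  then have "DeltaG \<sigma> (\<alpha>, \<beta>)
      = (\<Sum>k\<in>{0..length \<sigma>}. if k = length \<alpha> then of_bool (splits_into \<sigma> \<alpha> \<beta>) else 0)"
    unfolding DeltaG_def by (rule sum.cong[OF refl])
  also have "\<dots> = of_bool (splits_into \<sigma> \<alpha> \<beta>)"
    using splits_into_perm(3)[OF assms, of \<alpha> \<beta>] by auto
  finally show ?thesis .
qed

lemma finite_perms_SC: "finite {\<sigma>. is_perm \<sigma> \<and> SC \<sigma> = I}"
proof (rule finite_subset)
  show "{\<sigma>. is_perm \<sigma> \<and> SC \<sigma> = I} \<subseteq> {\<sigma>. set \<sigma> \<subseteq> {1..sum_list I} \<and> length \<sigma> = sum_list I}"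
    using sum_list_SC by (fastforce simp: is_perm_def)
qed (rule finite_lists_length_eq, simp)

lemma Delta_C_apply_card:
  "Delta (C I) (\<alpha>, \<beta>) = of_nat (card {\<sigma>. is_perm \<sigma> \<and> SC \<sigma> = I \<and> splits_into \<sigma> \<alpha> \<beta>})"
proof -
  have "{\<sigma>. C I \<sigma> \<noteq> 0} = {\<sigma>. is_perm \<sigma> \<and> SC \<sigma> = I}"
    by (simp add: C_def)
  then have "Delta (C I) (\<alpha>, \<beta>) = (\<Sum>\<sigma>\<in>{\<sigma>. is_perm \<sigma> \<and> SC \<sigma> = I}. of_bool (splits_into \<sigma> \<alpha> \<beta>))"
    unfolding Delta_def by (intro sum.cong) (auto simp: C_def DeltaG_perm_apply)
  also have "\<dots> = of_nat (card {\<sigma>. is_perm \<sigma> \<and> SC \<sigma> = I \<and> splits_into \<sigma> \<alpha> \<beta>})"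
    using finite_perms_SC by (simp add: Int_def conj_assoc)
  finally show ?thesis .
qed

definition coprod_coeff :: "nat list \<Rightarrow> nat list \<Rightarrow> nat list \<Rightarrow> nat" where
  "coprod_coeff I J K =
     (if is_composition J \<and> is_composition K \<and> sum_list J + sum_list K = sum_list I
      then card {w \<in> shuffle_words (sum_list J) (sum_list K).
                   merge_records False w (comp_marks J) (comp_marks K) = comp_marks I}
      else 0)"

lemma finite_compositions_sum_le: "finite {J. is_composition J \<and> sum_list J \<le> n}"
proof (rule finite_subset)
  have "length J \<le> sum_list J" if "is_composition J" for J
    using that by (induction J) (auto simp: is_composition_def)
  then show "{J. is_composition J \<and> sum_list J \<le> n} \<subseteq> {J. set J \<subseteq> {0..n} \<and> length J \<le> n}"
    by (auto dest: member_le_sum_list intro: order_trans)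
qed (rule finite_lists_length_le, simp)

lemma finite_coprod_coeff_support: "finite {(J, K). coprod_coeff I J K \<noteq> 0}"
proof (rule finite_subset)
  let ?B = "{J. is_composition J \<and> sum_list J \<le> sum_list I}"
  show "{(J, K). coprod_coeff I J K \<noteq> 0} \<subseteq> ?B \<times> ?B"
    by (auto simp: coprod_coeff_def split: if_splits)
  show "finite (?B \<times> ?B)"
    using finite_compositions_sum_le by blast
qed

lemma Delta_C_apply:
  assumes "is_composition I"
  shows "Delta (C I) (\<alpha>, \<beta>)
       = (if is_perm \<alpha> \<and> is_perm \<beta> then of_nat (coprod_coeff I (SC \<alpha>) (SC \<beta>)) else 0)"
proof (cases "is_perm \<alpha> \<and> is_perm \<beta> \<and> length \<alpha> + length \<beta> = sum_list I")
  case True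
  then have "sum_list (SC \<alpha>) = length \<alpha>" "sum_list (SC \<beta>) = length \<beta>"
    "is_composition (SC \<alpha>)" "is_composition (SC \<beta>)"
    by (simp_all add: sum_list_SC is_composition_SC is_perm_def)
  with True show ?thesis
    using card_perms_SC_splitting_into[OF assms, of \<alpha> \<beta>] Delta_C_apply_card[of I \<alpha> \<beta>]
    by (simp add: coprod_coeff_def)
next
  case False
  have "\<not> (is_perm \<sigma> \<and> SC \<sigma> = I \<and> splits_into \<sigma> \<alpha> \<beta>)" for \<sigma>
  proof
    assume \<sigma>: "is_perm \<sigma> \<and> SC \<sigma> = I \<and> splits_into \<sigma> \<alpha> \<beta>"
    then have "length \<sigma> = sum_list I"
      using sum_list_SC[of \<sigma>] by (simp add: is_perm_def)
    with \<sigma> False show False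
      using splits_into_perm[of \<sigma> \<alpha> \<beta>] by simp
  qed
  then have no_\<sigma>: "{\<sigma>. is_perm \<sigma> \<and> SC \<sigma> = I \<and> splits_into \<sigma> \<alpha> \<beta>} = {}"
    by blast
  have "coprod_coeff I (SC \<alpha>) (SC \<beta>) = 0" if "is_perm \<alpha>" "is_perm \<beta>"
    using False that by (simp add: coprod_coeff_def sum_list_SC is_perm_def)
  then show ?thesis
    unfolding Delta_C_apply_card no_\<sigma> by simp
qed

lemma sum_tensor_C_apply:
  fixes a :: "nat list \<Rightarrow> nat list \<Rightarrow> nat"
  assumes "finite {(J, K). a J K \<noteq> 0}"
  shows "(\<Sum>(J, K)\<in>{(J, K). a J K \<noteq> 0}. of_nat (a J K) * tensor (C J) (C K) (\<alpha>, \<beta>))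
       = (if is_perm \<alpha> \<and> is_perm \<beta> then of_nat (a (SC \<alpha>) (SC \<beta>)) else (0::rat))"
proof -
  have "(\<Sum>(J, K)\<in>{(J, K). a J K \<noteq> 0}. of_nat (a J K) * tensor (C J) (C K) (\<alpha>, \<beta>))
      = (\<Sum>p\<in>{(J, K). a J K \<noteq> 0}. if p = (SC \<alpha>, SC \<beta>)
           then (if is_perm \<alpha> \<and> is_perm \<beta> then of_nat (a (SC \<alpha>) (SC \<beta>)) else 0) else 0)"
    by (intro sum.cong) (auto simp: tensor_def C_def split: if_splits)
  also have "\<dots> = (if is_perm \<alpha> \<and> is_perm \<beta> then of_nat (a (SC \<alpha>) (SC \<beta>)) else 0)"
    using assms by (simp add: sum.delta)
  finally show ?thesis .
qed

theorem mainTheorem2: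
  assumes "is_composition I"
  shows "\<exists>a :: nat list \<Rightarrow> nat list \<Rightarrow> nat.
           finite {(J, K). a J K \<noteq> 0}
         \<and> (\<forall>J K. a J K \<noteq> 0 \<longrightarrow> is_composition J \<and> is_composition K)
         \<and> Delta (C I) = (\<lambda>p. \<Sum>(J, K)\<in>{(J, K). a J K \<noteq> 0}. of_nat (a J K) * tensor (C J) (C K) p)"
proof (intro exI[of _ "coprod_coeff I"] conjI allI impI ext)
  show "finite {(J, K). coprod_coeff I J K \<noteq> 0}"
    by (rule finite_coprod_coeff_support)
  show "is_composition J" "is_composition K" if "coprod_coeff I J K \<noteq> 0" for J K
    using that by (simp_all add: coprod_coeff_def split: if_splits)
  show "Delta (C I) p
      = (\<Sum>(J, K)\<in>{(J, K). coprod_coeff I J K \<noteq> 0}. of_nat (coprod_coeff I J K) * tensor (C J) (C K) p)"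
    for p
    using Delta_C_apply[OF assms] sum_tensor_C_apply[OF finite_coprod_coeff_support]
    by (cases p) simp
qed

end
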